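(* Let $A=(a(x),dF(x))$ and $B=(b(x),dF(x))$ be games. Then $h(p)=1/\int\frac{1}{pa(x)+(1-p)b(x)}\,dF(x)$ is concave on $[0,1]$.
   Context: A game is a pair $(a(x),dF(x))$ with $dF$ a probability measure on $\mathbb{R}$ and $a\ge0$ measurable with finite positive integral. Convention: $1/(+\infty)=0$. *)

theory Defs
  imports "HOL-Probability.Probability"
begin

definition game :: "real measure \<Rightarrow> (real \<Rightarrow> real) \<Rightarrow> bool" where
  "game F a \<longleftrightarrow> prob_space F \<and> sets F = sets borel \<and>
     a \<in> borel_measurable borel \<and> (\<forall>x. 0 \<le> a x) \<and>
     (\<integral>\<^sup>+ x. ennreal (a x) \<partial>F) < \<infinity> \<and> 0 < (\<integral>\<^sup>+ x. ennreal (a x) \<partial>F)"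

text \<open>h(p) = 1 / \<integral> 1/(p a + (1-p) b) dF, computed in ennreal:
  1/0 = \<infinity> for the integrand, and 1/\<infinity> = 0 for the outer reciprocal.\<close>
definition hfun :: "real measure \<Rightarrow> (real \<Rightarrow> real) \<Rightarrow> (real \<Rightarrow> real) \<Rightarrow> real \<Rightarrow> real" where
  "hfun F a b p = enn2real (inverse
     (\<integral>\<^sup>+ x. inverse (ennreal (p * a x + (1 - p) * b x)) \<partial>F))"

end

(* The harmonic mean H f = 1 / \<integral> 1/f of a nonnegative function is positively homogeneous and
   superadditive, hence concave in f; h is H composed with the affine map p \<mapsto> p a + (1 - p) b.
   Superadditivity follows by integrating the Engel form of Cauchy-Schwarz,
   (u A + v B)^2 / (u f + v g) \<le> u A^2 / f + v B^2 / g, with A = H f and B = H g, and using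
   A \<integral> 1/f \<le> 1 and B \<integral> 1/g \<le> 1: this gives (u A + v B)^2 \<integral> 1/(u f + v g) \<le> u A + v B,
   i.e. u A + v B \<le> H (u f + v g). *)

theory Submission
  imports Defs
begin

definition harmonic_mean :: "'a measure \<Rightarrow> ('a \<Rightarrow> real) \<Rightarrow> real" where
  "harmonic_mean M f = enn2real (inverse (\<integral>\<^sup>+ x. inverse (ennreal (f x)) \<partial>M))"

lemma Cauchy_Schwarz_Engel_form:
  fixes u v f g A B :: real
  assumes "0 \<le> u" "0 \<le> v" "0 \<le> f" "0 \<le> g"
    and "f = 0 \<Longrightarrow> u * A = 0" "g = 0 \<Longrightarrow> v * B = 0"
  shows "(u * A + v * B)\<^sup>2 \<le> (u * f + v * g) * (u * A\<^sup>2 / f + v * B\<^sup>2 / g)"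
proof (cases "f = 0 \<or> g = 0")
  case True
  with assms show ?thesis
    by (auto simp: power2_eq_square field_simps)
next
  case False
  with assms have "0 < f" "0 < g" by auto
  then have "(u * f + v * g) * (u * A\<^sup>2 / f + v * B\<^sup>2 / g) - (u * A + v * B)\<^sup>2
      = u * v * (A * g - B * f)\<^sup>2 / (f * g)"
    by (simp add: power2_eq_square field_simps)
  also have "\<dots> \<ge> 0"
    using assms \<open>0 < f\<close> \<open>0 < g\<close> by simp
  finally show ?thesis by simp
qed

lemma ennreal_mult_inverse_ennreal:
  "0 \<le> x \<Longrightarrow> 0 < y \<Longrightarrow> ennreal x * inverse (ennreal y) = ennreal (x / y)"
  using divide_ennreal by (simp add: divide_ennreal_def)

lemma ennreal_Cauchy_Schwarz_Engel_form:
  fixes u v f g A B :: real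
  assumes "0 \<le> u" "0 \<le> v" "0 \<le> f" "0 \<le> g"
  shows "ennreal ((u * A + v * B)\<^sup>2) * inverse (ennreal (u * f + v * g))
    \<le> ennreal (u * A\<^sup>2) * inverse (ennreal f) + ennreal (v * B\<^sup>2) * inverse (ennreal g)"
proof (cases "f = 0 \<and> u * A \<noteq> 0 \<or> g = 0 \<and> v * B \<noteq> 0")
  case True
  then show ?thesis
    using assms by (auto simp: ennreal_mult_top)
next
  case False
  then have f0: "f = 0 \<Longrightarrow> u * A = 0" and g0: "g = 0 \<Longrightarrow> v * B = 0"
    by auto
  show ?thesis
  proof (cases "u * f + v * g = 0")
    case True
    with assms have "u * A + v * B = 0"
      using f0 g0 by (auto simp: add_nonneg_eq_0_iff)
    then show ?thesis by simp
  next
    case False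
    with assms have pos: "0 < u * f + v * g"
      by (simp add: order_less_le)
    have "ennreal (u * A\<^sup>2) * inverse (ennreal f) = ennreal (u * A\<^sup>2 / f)"
      using assms f0 by (cases "f = 0") (auto simp: ennreal_mult_inverse_ennreal power2_eq_square)
    moreover have "ennreal (v * B\<^sup>2) * inverse (ennreal g) = ennreal (v * B\<^sup>2 / g)"
      using assms g0 by (cases "g = 0") (auto simp: ennreal_mult_inverse_ennreal power2_eq_square)
    moreover have "ennreal ((u * A + v * B)\<^sup>2) * inverse (ennreal (u * f + v * g))
        = ennreal ((u * A + v * B)\<^sup>2 / (u * f + v * g))"
      using pos by (intro ennreal_mult_inverse_ennreal) auto
    moreover have "(u * A + v * B)\<^sup>2 / (u * f + v * g) \<le> u * A\<^sup>2 / f + v * B\<^sup>2 / g"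
      using Cauchy_Schwarz_Engel_form[OF assms f0 g0] pos
      by (simp add: divide_le_eq mult.commute)
    ultimately show ?thesis
      using assms by (simp add: ennreal_plus[symmetric] del: ennreal_plus)
  qed
qed

lemma ennreal_enn2real_inverse_mult_le_one: "ennreal (enn2real (inverse I)) * I \<le> 1"
proof (cases I)
  case (real r)
  then show ?thesis
    by (cases "r = 0") (auto simp: inverse_ennreal ennreal_mult[symmetric])
qed simp

lemma le_enn2real_inverse_if_square_mult_le:
  fixes S :: real and I :: ennreal
  assumes "0 < I" and "ennreal (S\<^sup>2) * I \<le> ennreal S"
  shows "S \<le> enn2real (inverse I)"
proof (cases "0 < S")
  case True
  have "I \<noteq> \<top>"
    using assms True by (auto simp: ennreal_mult_top top_unique)
  then obtain R where R: "I = ennreal R" "0 < R"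
    using \<open>0 < I\<close> by (cases I) auto
  then have "S * (S * R) \<le> S * 1"
    using assms True by (simp add: ennreal_mult''[symmetric] power2_eq_square mult.assoc)
  then have "S * R \<le> 1"
    using True by simp
  then show ?thesis
    using R by (simp add: inverse_ennreal inverse_eq_divide le_divide_eq mult.commute)
qed (use enn2real_nonneg[of "inverse I"] in linarith)

lemma nn_integral_inverse_ennreal_pos:
  assumes "emeasure M (space M) \<noteq> 0" and "f \<in> borel_measurable M"
  shows "0 < (\<integral>\<^sup>+ x. inverse (ennreal (f x)) \<partial>M)"
  using assms
  by (simp add: zero_less_iff_neq_zero nn_integral_0_iff_AE eventually_False ae_filter_eq_bot_iff)

lemma harmonic_mean_linear_combination_ge:
  assumes M: "emeasure M (space M) \<noteq> 0"
    and [measurable]: "f \<in> borel_measurable M" "g \<in> borel_measurable M"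
    and "\<And>x. x \<in> space M \<Longrightarrow> 0 \<le> f x" "\<And>x. x \<in> space M \<Longrightarrow> 0 \<le> g x"
    and "0 \<le> u" "0 \<le> v"
  shows "u * harmonic_mean M f + v * harmonic_mean M g \<le> harmonic_mean M (\<lambda>x. u * f x + v * g x)"
proof -
  define A B S where "A = harmonic_mean M f" and "B = harmonic_mean M g" and "S = u * A + v * B"
  define I where "I = (\<integral>\<^sup>+ x. inverse (ennreal (u * f x + v * g x)) \<partial>M)"
  have term_le: "ennreal (c * (harmonic_mean M h)\<^sup>2) * (\<integral>\<^sup>+ x. inverse (ennreal (h x)) \<partial>M)
      \<le> ennreal (c * harmonic_mean M h)" if "0 \<le> c" for c h
  proof -
    have "ennreal (c * (harmonic_mean M h)\<^sup>2)
        = ennreal (c * harmonic_mean M h) * ennreal (harmonic_mean M h)"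
      using that by (simp add: harmonic_mean_def ennreal_mult'' power2_eq_square mult.assoc)
    then show ?thesis
      using ennreal_enn2real_inverse_mult_le_one mult_left_mono[of _ 1]
      by (fastforce simp: mult.assoc harmonic_mean_def)
  qed
  have "ennreal (S\<^sup>2) * I = (\<integral>\<^sup>+ x. ennreal (S\<^sup>2) * inverse (ennreal (u * f x + v * g x)) \<partial>M)"
    unfolding I_def by (simp add: nn_integral_cmult)
  also have "\<dots> \<le> (\<integral>\<^sup>+ x. ennreal (u * A\<^sup>2) * inverse (ennreal (f x))
      + ennreal (v * B\<^sup>2) * inverse (ennreal (g x)) \<partial>M)"
    unfolding S_def using assms
    by (intro nn_integral_mono ennreal_Cauchy_Schwarz_Engel_form) auto
  also have "\<dots> = ennreal (u * A\<^sup>2) * (\<integral>\<^sup>+ x. inverse (ennreal (f x)) \<partial>M)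
      + ennreal (v * B\<^sup>2) * (\<integral>\<^sup>+ x. inverse (ennreal (g x)) \<partial>M)"
    by (simp add: nn_integral_add nn_integral_cmult)
  also have "\<dots> \<le> ennreal (u * A) + ennreal (v * B)"
    unfolding A_def B_def using assms by (intro add_mono term_le)
  also have "\<dots> = ennreal S"
    unfolding S_def A_def B_def using assms by (simp add: harmonic_mean_def ennreal_plus)
  finally have "ennreal (S\<^sup>2) * I \<le> ennreal S" .
  moreover have "0 < I"
    unfolding I_def using M by (intro nn_integral_inverse_ennreal_pos) measurable
  moreover have "harmonic_mean M (\<lambda>x. u * f x + v * g x) = enn2real (inverse I)"
    by (simp add: harmonic_mean_def I_def)
  ultimately show ?thesis
    unfolding S_def A_def B_def by (simp add: le_enn2real_inverse_if_square_mult_le)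
qed

lemma concave_on_harmonic_mean_affine:
  assumes M: "emeasure M (space M) \<noteq> 0"
    and [measurable]: "a \<in> borel_measurable M" "b \<in> borel_measurable M"
    and "\<And>x. x \<in> space M \<Longrightarrow> 0 \<le> a x" "\<And>x. x \<in> space M \<Longrightarrow> 0 \<le> b x"
  shows "concave_on {0..1} (\<lambda>p. harmonic_mean M (\<lambda>x. p * a x + (1 - p) * b x))"
proof -
  define mix where "mix p x = p * a x + (1 - p) * b x" for p x
  have mix_measurable: "mix p \<in> borel_measurable M" for p
    unfolding mix_def by measurable
  have mix_nonneg: "0 \<le> mix p x" if "p \<in> {0..1}" "x \<in> space M" for p x
    using that assms by (simp add: mix_def)
  have mix_convex_combination: "mix (u * p + v * q) = (\<lambda>x. u * mix p x + v * mix q x)"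
    if "u + v = 1" for u v p q
  proof
    fix x
    have "b x = (u + v) * b x" using that by simp
    then show "mix (u * p + v * q) x = u * mix p x + v * mix q x"
      unfolding mix_def by (simp add: algebra_simps)
  qed
  have "u * harmonic_mean M (mix p) + v * harmonic_mean M (mix q)
      \<le> harmonic_mean M (mix (u * p + v * q))"
    if "p \<in> {0..1}" "q \<in> {0..1}" "0 \<le> u" "0 \<le> v" "u + v = 1" for p q u v
    unfolding mix_convex_combination[OF \<open>u + v = 1\<close>]
    using that by (intro harmonic_mean_linear_combination_ge M mix_measurable mix_nonneg)
  then show ?thesis
    unfolding concave_on_iff mix_def by auto
qed

theorem lemmaD10:
  fixes F :: "real measure" and a b :: "real \<Rightarrow> real"
  assumes "game F a" and "game F b"
  shows "concave_on {0..1} (hfun F a b)"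
proof -
  have F: "prob_space F" "sets F = sets borel"
    and a: "a \<in> borel_measurable borel" "\<And>x. 0 \<le> a x"
    and b: "b \<in> borel_measurable borel" "\<And>x. 0 \<le> b x"
    using assms unfolding game_def by auto
  have "emeasure F (space F) \<noteq> 0"
    using prob_space.emeasure_space_1[OF F(1)] by simp
  moreover have "a \<in> borel_measurable F" "b \<in> borel_measurable F"
    using a b measurable_cong_sets[OF F(2) refl] by auto
  ultimately have "concave_on {0..1} (\<lambda>p. harmonic_mean F (\<lambda>x. p * a x + (1 - p) * b x))"
    using a b by (intro concave_on_harmonic_mean_affine)
  moreover have "hfun F a b = (\<lambda>p. harmonic_mean F (\<lambda>x. p * a x + (1 - p) * b x))"
    by (simp add: fun_eq_iff hfun_def harmonic_mean_def)
  ultimately show ?thesis by simp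
qed

end
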